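(* In the two-door cascading memoryless setting, every semi-fractional sequence $\pi$ has an integer sequence $\pi'$ such that $\mathbb{E}[\pi']\le\mathbb{E}[\pi]+1$.
   Context: Two cascading memoryless doors with durations: parameters $p_1,p_2\in(0,1)$, $q_1=1-p_1$, $q_2=1-p_2$, and $c>0$. Both doors start closed. A semi-fractional sequence is an infinite alternating sequence $1^{t_1}\,2\,1^{t_2}\,2\,1^{t_3}\,2\cdots$ with real $t_j\ge0$; equivalently it is given by a non-decreasing sequence of reals $0=\pi_0\le\pi_1\le\pi_2\le\cdots$ with $t_j=\pi_j-\pi_{j-1}$. A 1-knock $1^t$ takes $t$ time units and, if door 1 is closed, opens it with probability $1-q_1^t$, independently of everything else. A 2-knock takes $c$ time units and opens door 2 with probability $p_2$ (independently) if door 1 is open at that time, and with probability $0$ otherwise. There is no feedback. The running time is the time at which both doors are open (i.e. the end of the 2-knock that opens door 2; the $i$-th 2-knock ends at time $\pi_i+ci$), and $\mathbb{E}[\pi]$ denotes its expectation. An integer sequence is a semi-fractional sequence with all $\pi_i\in\mathbb{N}$ (equivalently, an ordinary sequence of unit-length knocks on door 1 and knocks on door 2). *)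

theory Defs
  imports "HOL-Analysis.Analysis"
begin

text \<open>A semi-fractional sequence is given by the non-decreasing real sequence
  0 = pi 0 \<le> pi 1 \<le> pi 2 \<le> ...; pi i is the total 1-knock time before the i-th 2-knock,
  and the i-th 2-knock ends at time pi i + c * i.\<close>

definition semi_fractional :: "(nat \<Rightarrow> real) \<Rightarrow> bool" where
  "semi_fractional \<pi> \<longleftrightarrow> \<pi> 0 = 0 \<and> mono \<pi>"

definition integer_sequence :: "(nat \<Rightarrow> real) \<Rightarrow> bool" where
  "integer_sequence \<pi> \<longleftrightarrow> semi_fractional \<pi> \<and> (\<forall>i. \<pi> i \<in> \<nat>)"

text \<open>Probability that door 1 is open for the first time at the j-th 2-knock (j \<ge> 1):
  door 1 is still closed after total 1-knock time s with probability q1 powr s.\<close>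
definition door1_first :: "real \<Rightarrow> (nat \<Rightarrow> real) \<Rightarrow> nat \<Rightarrow> real" where
  "door1_first p1 \<pi> j = (1 - p1) powr \<pi> (j - 1) - (1 - p1) powr \<pi> j"

text \<open>Probability that door 2 is opened by the k-th 2-knock (k \<ge> 1): door 1 was first
  open at the j-th 2-knock, the 2-knocks j..k-1 failed and the k-th succeeds.\<close>
definition finish_prob :: "real \<Rightarrow> real \<Rightarrow> (nat \<Rightarrow> real) \<Rightarrow> nat \<Rightarrow> real" where
  "finish_prob p1 p2 \<pi> k = (\<Sum>j\<in>{1..k}. door1_first p1 \<pi> j * (1 - p2) ^ (k - j) * p2)"

text \<open>Expected running time (in [0, \<infinity>]): the running time equals pi k + c * k when
  door 2 opens at the k-th 2-knock, and is infinite if both doors never open.\<close>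
definition expected_time :: "real \<Rightarrow> real \<Rightarrow> real \<Rightarrow> (nat \<Rightarrow> real) \<Rightarrow> ennreal" where
  "expected_time p1 p2 c \<pi> =
     (\<Sum>k. ennreal (finish_prob p1 p2 \<pi> (Suc k) * (\<pi> (Suc k) + c * real (Suc k))))
     + top * (1 - (\<Sum>k. ennreal (finish_prob p1 p2 \<pi> (Suc k))))"

end

theory Submission
  imports Defs
begin

text \<open>Rounding every 1-knock time up to the next integer can only open door 1 earlier, so the
  index of the successful 2-knock becomes stochastically smaller.  If the original sequence
  fails with positive probability its expected running time is infinite; otherwise its running
  time is a non-decreasing function of that index, Abel summation turns the dominance into a
  comparison of expectations, and rounding delays each 2-knock by at most one time unit.\<close>

lemma weighted_sum_le_of_partial_sums_le:
  fixes u v b :: "nat \<Rightarrow> real"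
  assumes "mono b" "\<And>N. (\<Sum>k<N. u k) \<le> (\<Sum>k<N. v k)"
  shows "(\<Sum>k<N. v k * b k) \<le> (\<Sum>k<N. u k * b k) + b N * ((\<Sum>k<N. v k) - (\<Sum>k<N. u k))"
proof (induction N)
  case 0
  then show ?case by simp
next
  case (Suc N)
  have "b N * ((\<Sum>k<Suc N. v k) - (\<Sum>k<Suc N. u k)) \<le> b (Suc N) * ((\<Sum>k<Suc N. v k) - (\<Sum>k<Suc N. u k))"
    using assms(1) assms(2)[of "Suc N"] by (intro mult_right_mono) (auto simp: monoD)
  then show ?case using Suc by (simp add: algebra_simps)
qed

lemma weighted_sum_le_suminf_of_dominated:
  fixes u v b :: "nat \<Rightarrow> real"
  assumes "mono b" "\<And>k. 0 \<le> b k" "\<And>k. 0 \<le> u k"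
    and "summable u" "summable (\<lambda>k. u k * b k)"
    and "\<And>N. (\<Sum>k<N. u k) \<le> (\<Sum>k<N. v k)" "\<And>N. (\<Sum>k<N. v k) \<le> suminf u"
  shows "(\<Sum>k<N. v k * b k) \<le> (\<Sum>k. u k * b k)"
proof -
  have tail_summable: "summable (\<lambda>k. u (k + N))"
    using assms(4) by (rule summable_ignore_initial_segment)
  have "b N * (\<Sum>k. u (k + N)) = (\<Sum>k. b N * u (k + N))"
    using suminf_mult[OF tail_summable] by simp
  also have "\<dots> \<le> (\<Sum>k. u (k + N) * b (k + N))"
  proof (rule suminf_le)
    show "b N * u (k + N) \<le> u (k + N) * b (k + N)" for k
      using assms(3)[of "k + N"] monoD[OF assms(1), of N "k + N"]
      by (simp add: mult.commute mult_right_mono)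
  qed (use summable_mult[OF tail_summable] summable_ignore_initial_segment[OF assms(5), of N] in simp_all)
  finally have tail: "b N * (suminf u - (\<Sum>k<N. u k)) \<le> (\<Sum>k. u k * b k) - (\<Sum>k<N. u k * b k)"
    using suminf_split_initial_segment[OF assms(4), of N]
      suminf_split_initial_segment[OF assms(5), of N] by simp
  have "b N * ((\<Sum>k<N. v k) - (\<Sum>k<N. u k)) \<le> b N * (suminf u - (\<Sum>k<N. u k))"
    using assms(2,7) by (intro mult_left_mono) auto
  then show ?thesis
    using weighted_sum_le_of_partial_sums_le[OF assms(1,6), of N] tail by linarith
qed

lemma weighted_suminf_ennreal_le_of_dominated:
  fixes u v b :: "nat \<Rightarrow> real"
  assumes "mono b" "\<And>k. 0 \<le> b k" "\<And>k. 0 \<le> u k" "\<And>k. 0 \<le> v k" "summable u"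
    and "\<And>N. (\<Sum>k<N. u k) \<le> (\<Sum>k<N. v k)" "\<And>N. (\<Sum>k<N. v k) \<le> suminf u"
  shows "(\<Sum>k. ennreal (v k * b k)) \<le> (\<Sum>k. ennreal (u k * b k))"
proof (cases "(\<Sum>k. ennreal (u k * b k)) = top")
  case False
  have summable: "summable (\<lambda>k. u k * b k)"
    using summable_suminf_not_top[OF _ False] assms(2,3) by simp
  have "(\<Sum>k<N. ennreal (v k * b k)) \<le> (\<Sum>k. ennreal (u k * b k))" for N
  proof -
    have "(\<Sum>k<N. ennreal (v k * b k)) = ennreal (\<Sum>k<N. v k * b k)"
      using assms(2,4) by (intro sum_ennreal) simp
    also have "\<dots> \<le> ennreal (\<Sum>k. u k * b k)"
      using weighted_sum_le_suminf_of_dominated[OF assms(1-3,5) summable assms(6,7)]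
      by (rule ennreal_leI)
    also have "\<dots> = (\<Sum>k. ennreal (u k * b k))"
      using assms(2,3) summable by (intro suminf_ennreal2[symmetric]) simp_all
    finally show ?thesis .
  qed
  then show ?thesis
    unfolding suminf_eq_SUP by (rule SUP_least)
qed simp

lemma suminf_le_of_partial_sums_le:
  fixes u v :: "nat \<Rightarrow> real"
  assumes "summable u" "summable v" "\<And>k. 0 \<le> v k" "\<And>N. (\<Sum>k<N. u k) \<le> (\<Sum>k<N. v k)"
  shows "suminf u \<le> suminf v"
proof (rule suminf_le_const[OF assms(1)])
  show "(\<Sum>k<N. u k) \<le> suminf v" for N
    using assms(4)[of N] sum_le_suminf[OF assms(2), of "{..<N}"] assms(3) by auto
qed

lemma suminf_ennreal_mult_le_of_le_add_1:
  fixes v a a' :: "nat \<Rightarrow> real"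
  assumes "\<And>k. 0 \<le> v k" "\<And>k. 0 \<le> a k" "\<And>k. a' k \<le> a k + 1"
  shows "(\<Sum>k. ennreal (v k * a' k)) \<le> (\<Sum>k. ennreal (v k * a k)) + (\<Sum>k. ennreal (v k))"
proof -
  have "ennreal (v k * a' k) \<le> ennreal (v k * a k) + ennreal (v k)" for k
  proof -
    have "v k * a' k \<le> v k * a k + v k"
      using mult_left_mono[OF assms(3) assms(1)] by (simp add: distrib_left)
    then have "ennreal (v k * a' k) \<le> ennreal (v k * a k + v k)"
      by (rule ennreal_leI)
    also have "\<dots> = ennreal (v k * a k) + ennreal (v k)"
      using assms(1,2) by (simp add: ennreal_plus)
    finally show ?thesis .
  qed
  then have "(\<Sum>k. ennreal (v k * a' k)) \<le> (\<Sum>k. ennreal (v k * a k) + ennreal (v k))"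
    by (intro suminf_le) auto
  also have "\<dots> = (\<Sum>k. ennreal (v k * a k)) + (\<Sum>k. ennreal (v k))"
    by (rule suminf_add[symmetric]) auto
  finally show ?thesis .
qed

definition door1_open :: "real \<Rightarrow> (nat \<Rightarrow> real) \<Rightarrow> nat \<Rightarrow> real" where
  "door1_open p1 \<pi> j = 1 - (1 - p1) powr \<pi> j"

definition finish_cdf :: "real \<Rightarrow> real \<Rightarrow> (nat \<Rightarrow> real) \<Rightarrow> nat \<Rightarrow> real" where
  "finish_cdf p1 p2 \<pi> N = (\<Sum>k<N. finish_prob p1 p2 \<pi> (Suc k))"

lemma finish_prob_Suc_Suc:
  "finish_prob p1 p2 \<pi> (Suc (Suc k)) =
     (1 - p2) * finish_prob p1 p2 \<pi> (Suc k) + door1_first p1 \<pi> (Suc (Suc k)) * p2"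
proof -
  have "finish_prob p1 p2 \<pi> (Suc (Suc k)) =
      (\<Sum>j\<in>{1..Suc k}. door1_first p1 \<pi> j * (1 - p2) ^ (Suc (Suc k) - j) * p2)
      + door1_first p1 \<pi> (Suc (Suc k)) * p2"
    unfolding finish_prob_def by (simp add: sum.cl_ivl_Suc)
  also have "(\<Sum>j\<in>{1..Suc k}. door1_first p1 \<pi> j * (1 - p2) ^ (Suc (Suc k) - j) * p2)
      = (1 - p2) * finish_prob p1 p2 \<pi> (Suc k)"
    unfolding finish_prob_def sum_distrib_left by (rule sum.cong) (auto simp: Suc_diff_le)
  finally show ?thesis .
qed

text \<open>Rewritten as finish_cdf (N+1) = finish_cdf N + p2 * (door1_open (N+1) - finish_cdf N):
  door 2 can only have been opened while door 1 was open, so the difference is the probability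
  that door 1 is open and door 2 still closed at the (N+1)-th 2-knock.  The hypothesis on p1
  excludes the junk value 0 powr 0 = 0.\<close>
lemma finish_cdf_Suc:
  assumes "\<pi> 0 = 0" "p1 \<noteq> 1"
  shows "finish_cdf p1 p2 \<pi> (Suc N) = (1 - p2) * finish_cdf p1 p2 \<pi> N + p2 * door1_open p1 \<pi> (Suc N)"
proof (induction N)
  case 0
  then show ?case
    using assms by (simp add: finish_cdf_def finish_prob_def door1_first_def door1_open_def)
next
  case (Suc N)
  have "finish_cdf p1 p2 \<pi> (Suc (Suc N)) = finish_cdf p1 p2 \<pi> (Suc N) + finish_prob p1 p2 \<pi> (Suc (Suc N))"
    by (simp add: finish_cdf_def)
  also have "\<dots> = (1 - p2) * (finish_cdf p1 p2 \<pi> N + finish_prob p1 p2 \<pi> (Suc N))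
      + p2 * door1_open p1 \<pi> (Suc (Suc N))"
    unfolding Suc finish_prob_Suc_Suc by (simp add: door1_open_def door1_first_def algebra_simps)
  also have "finish_cdf p1 p2 \<pi> N + finish_prob p1 p2 \<pi> (Suc N) = finish_cdf p1 p2 \<pi> (Suc N)"
    by (simp add: finish_cdf_def)
  finally show ?case .
qed

lemma finish_cdf_mono:
  assumes "\<pi> 0 = 0" "\<pi>' 0 = 0" "0 \<le> p1" "p1 < 1" "0 \<le> p2" "p2 \<le> 1"
    and "\<And>j. \<pi> j \<le> \<pi>' j"
  shows "finish_cdf p1 p2 \<pi> N \<le> finish_cdf p1 p2 \<pi>' N"
proof (induction N)
  case 0
  then show ?case by (simp add: finish_cdf_def)
next
  case (Suc N)
  have "door1_open p1 \<pi> (Suc N) \<le> door1_open p1 \<pi>' (Suc N)"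
    unfolding door1_open_def using assms by (simp add: powr_mono')
  then show ?case
    using Suc assms finish_cdf_Suc[of \<pi> p1 p2 N] finish_cdf_Suc[of \<pi>' p1 p2 N]
    by (simp add: add_mono mult_left_mono)
qed

lemma finish_cdf_le_1:
  assumes "\<pi> 0 = 0" "p1 \<noteq> 1" "0 \<le> p2" "p2 \<le> 1"
  shows "finish_cdf p1 p2 \<pi> N \<le> 1"
proof (induction N)
  case 0
  then show ?case by (simp add: finish_cdf_def)
next
  case (Suc N)
  have "p2 * door1_open p1 \<pi> (Suc N) \<le> p2"
    using assms by (simp add: door1_open_def mult_left_le)
  moreover have "(1 - p2) * finish_cdf p1 p2 \<pi> N \<le> 1 - p2"
    using Suc assms by (simp add: mult_left_le)
  ultimately show ?case
    using finish_cdf_Suc[of \<pi> p1 p2 N] assms by simp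
qed

lemma finish_prob_nonneg:
  assumes "mono \<pi>" "0 \<le> p1" "p1 \<le> 1" "0 \<le> p2" "p2 \<le> 1"
  shows "0 \<le> finish_prob p1 p2 \<pi> k"
  unfolding finish_prob_def
proof (intro sum_nonneg mult_nonneg_nonneg)
  fix j
  have "\<pi> (j - 1) \<le> \<pi> j" using assms(1) by (simp add: monoD)
  then show "0 \<le> door1_first p1 \<pi> j"
    unfolding door1_first_def using assms by (simp add: powr_mono')
qed (use assms in auto)

lemma semi_fractional_nonneg: "semi_fractional \<pi> \<Longrightarrow> 0 \<le> \<pi> k"
  unfolding semi_fractional_def by (metis monoD zero_le)

lemma finish_prob_summable:
  assumes "semi_fractional \<pi>" "0 \<le> p1" "p1 < 1" "0 \<le> p2" "p2 \<le> 1"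
  shows "summable (\<lambda>k. finish_prob p1 p2 \<pi> (Suc k))" "(\<Sum>k. finish_prob p1 p2 \<pi> (Suc k)) \<le> 1"
proof -
  have "\<pi> 0 = 0" "mono \<pi>"
    using assms(1) by (auto simp: semi_fractional_def)
  then have nonneg: "0 \<le> finish_prob p1 p2 \<pi> (Suc k)"
    and partial_le_1: "(\<Sum>k<N. finish_prob p1 p2 \<pi> (Suc k)) \<le> 1" for k N
    using assms(2-5) finish_prob_nonneg finish_cdf_le_1[of \<pi> p1 p2 N]
    by (auto simp: finish_cdf_def)
  show summable: "summable (\<lambda>k. finish_prob p1 p2 \<pi> (Suc k))"
    using nonneg partial_le_1 by (rule summableI_nonneg_bounded)
  show "(\<Sum>k. finish_prob p1 p2 \<pi> (Suc k)) \<le> 1"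
    using summable partial_le_1 by (rule suminf_le_const)
qed

lemma expected_time_eq_top:
  assumes "(\<Sum>k. ennreal (finish_prob p1 p2 \<pi> (Suc k))) < 1"
  shows "expected_time p1 p2 c \<pi> = top"
proof -
  have "1 - (\<Sum>k. ennreal (finish_prob p1 p2 \<pi> (Suc k))) \<noteq> 0"
    using assms by (metis diff_gr0_ennreal not_gr_zero)
  then show ?thesis
    by (simp add: expected_time_def)
qed

lemma expected_time_eq_suminf:
  assumes "1 \<le> (\<Sum>k. ennreal (finish_prob p1 p2 \<pi> (Suc k)))"
  shows "expected_time p1 p2 c \<pi> =
    (\<Sum>k. ennreal (finish_prob p1 p2 \<pi> (Suc k) * (\<pi> (Suc k) + c * real (Suc k))))"
  using assms by (simp add: expected_time_def diff_eq_0_ennreal)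

lemma expected_time_le_of_delay_le_1:
  assumes "0 \<le> p1" "p1 < 1" "0 \<le> p2" "p2 \<le> 1" "0 \<le> c"
    and "semi_fractional \<pi>" "semi_fractional \<pi>'"
    and "\<And>k. \<pi> k \<le> \<pi>' k" "\<And>k. \<pi>' k \<le> \<pi> k + 1"
  shows "expected_time p1 p2 c \<pi>' \<le> expected_time p1 p2 c \<pi> + 1"
proof (cases "(\<Sum>k. ennreal (finish_prob p1 p2 \<pi> (Suc k))) < 1")
  case True
  then show ?thesis
    by (simp add: expected_time_eq_top)
next
  case False
  define u where "u k = finish_prob p1 p2 \<pi> (Suc k)" for k
  define v where "v k = finish_prob p1 p2 \<pi>' (Suc k)" for k
  define b where "b k = \<pi> (Suc k) + c * real (Suc k)" for k
  have \<pi>_0: "\<pi> 0 = 0" "\<pi>' 0 = 0" and \<pi>_mono: "mono \<pi>" "mono \<pi>'"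
    using assms(6,7) by (auto simp: semi_fractional_def)
  have u_nonneg: "0 \<le> u k" and v_nonneg: "0 \<le> v k" for k
    unfolding u_def v_def using assms(1-4) \<pi>_mono by (auto intro!: finish_prob_nonneg)
  have b_nonneg: "0 \<le> b k" for k
    using semi_fractional_nonneg[OF assms(6)] assms(5) by (simp add: b_def)
  have b_mono: "mono b"
    unfolding b_def mono_def using assms(5) by (auto intro!: add_mono mult_left_mono monoD[OF \<pi>_mono(1)])
  have dominated: "(\<Sum>k<N. u k) \<le> (\<Sum>k<N. v k)" for N
    using finish_cdf_mono[of \<pi> \<pi>' p1 p2 N] \<pi>_0 assms(1-4,8)
    by (simp add: finish_cdf_def u_def v_def)
  have u_summable: "summable u" and v_summable: "summable v" and v_suminf_le_1: "suminf v \<le> 1"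
    using finish_prob_summable[OF assms(6), of p1 p2] finish_prob_summable[OF assms(7), of p1 p2] assms(1-4)
    unfolding u_def v_def by simp_all
  have u_ennreal: "(\<Sum>k. ennreal (u k)) = ennreal (suminf u)"
    and v_ennreal: "(\<Sum>k. ennreal (v k)) = ennreal (suminf v)"
    using suminf_ennreal2 u_nonneg v_nonneg u_summable v_summable by auto
  have u_suminf: "1 \<le> suminf u"
    using False u_ennreal by (simp add: u_def ennreal_le_iff2)
  have v_suminf: "suminf v = 1"
    using suminf_le_of_partial_sums_le[OF u_summable v_summable v_nonneg dominated]
      u_suminf v_suminf_le_1 by linarith
  have v_partial_le: "(\<Sum>k<N. v k) \<le> suminf u" for N
    using sum_le_suminf[OF v_summable, of "{..<N}"] v_nonneg v_suminf u_suminf by auto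
  have "expected_time p1 p2 c \<pi>' = (\<Sum>k. ennreal (v k * (\<pi>' (Suc k) + c * real (Suc k))))"
    using v_ennreal v_suminf by (simp add: expected_time_eq_suminf v_def)
  also have "\<dots> \<le> (\<Sum>k. ennreal (v k * b k)) + (\<Sum>k. ennreal (v k))"
    using v_nonneg b_nonneg assms(9) by (intro suminf_ennreal_mult_le_of_le_add_1) (simp_all add: b_def)
  also have "\<dots> \<le> (\<Sum>k. ennreal (u k * b k)) + 1"
    using weighted_suminf_ennreal_le_of_dominated[OF b_mono b_nonneg u_nonneg v_nonneg
        u_summable dominated v_partial_le]
    by (simp add: v_ennreal v_suminf)
  also have "\<dots> = expected_time p1 p2 c \<pi> + 1"
    using False by (simp add: expected_time_eq_suminf u_def b_def)
  finally show ?thesis .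
qed

lemma integer_sequence_round_up:
  assumes "semi_fractional \<pi>"
  shows "integer_sequence (\<lambda>k. real (nat \<lceil>\<pi> k\<rceil>))"
proof -
  have "mono (\<lambda>k. real (nat \<lceil>\<pi> k\<rceil>))"
    using assms unfolding semi_fractional_def mono_def
    by (metis ceiling_mono nat_mono of_nat_mono)
  then show ?thesis
    using assms by (simp add: integer_sequence_def semi_fractional_def)
qed

theorem mainTheorem10:
  fixes p1 p2 c :: real and \<pi> :: "nat \<Rightarrow> real"
  assumes "0 < p1" "p1 < 1" "0 < p2" "p2 < 1" "0 < c"
    and "semi_fractional \<pi>"
  shows "\<exists>\<pi>'. integer_sequence \<pi>' \<and> expected_time p1 p2 c \<pi>' \<le> expected_time p1 p2 c \<pi> + 1"
proof (intro exI conjI)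
  let ?\<pi>' = "\<lambda>k. real (nat \<lceil>\<pi> k\<rceil>)"
  show integer: "integer_sequence ?\<pi>'"
    using assms(6) by (rule integer_sequence_round_up)
  have "\<pi> k \<le> ?\<pi>' k" "?\<pi>' k \<le> \<pi> k + 1" for k
    using semi_fractional_nonneg[OF assms(6), of k]
    by (simp_all add: le_of_int_ceiling of_int_ceiling_le_add_one)
  with assms integer show "expected_time p1 p2 c ?\<pi>' \<le> expected_time p1 p2 c \<pi> + 1"
    by (intro expected_time_le_of_delay_le_1) (auto simp: integer_sequence_def)
qed

end
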